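(* Let $n\ge 1$, let $G\in\mathcal{G}_{2n}$, and let $M_s$ be a perfect matching of $G$ with $f(G,M_s)=n-1$. Then for every perfect matching $M$ of $G$, $M_s$ can be obtained from $M$ by a finite sequence of matching 2-switches (possibly empty).
   Context: All graphs are finite and simple. $\mathcal{G}_{2n}$ denotes the set of all graphs with $2n$ vertices that have a perfect matching. For a perfect matching $M$ of $G$, a forcing set of $M$ is a subset $S\subseteq M$ contained in no other perfect matching of $G$; $f(G,M)$ is the minimum size of a forcing set of $M$. A cycle is $M$-alternating if its edges alternate between $M$ and $E(G)\setminus M$. If $C$ is an $M$-alternating cycle of length $4$, the perfect matching $M\oplus E(C)=(M\setminus E(C))\cup(E(C)\setminus M)$ is said to be obtained from $M$ by a matching 2-switch. *)

theory Defs
  imports Main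
begin

definition simple_graph :: "'a set \<Rightarrow> 'a set set \<Rightarrow> bool" where
  "simple_graph V E \<longleftrightarrow> finite V \<and> (\<forall>e\<in>E. e \<subseteq> V \<and> card e = 2)"

definition perfect_matching :: "'a set \<Rightarrow> 'a set set \<Rightarrow> 'a set set \<Rightarrow> bool" where
  "perfect_matching V E M \<longleftrightarrow> M \<subseteq> E \<and> (\<forall>v\<in>V. \<exists>!e. e \<in> M \<and> v \<in> e)"

definition forcing_set :: "'a set \<Rightarrow> 'a set set \<Rightarrow> 'a set set \<Rightarrow> 'a set set \<Rightarrow> bool" where
  "forcing_set V E M S \<longleftrightarrow> S \<subseteq> M \<and>
     (\<forall>M'. perfect_matching V E M' \<and> S \<subseteq> M' \<longrightarrow> M' = M)"

text \<open>Forcing number f(G,M): minimum size of a forcing set of M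
(M itself is always a forcing set, so the minimum exists).\<close>
definition forcing_number :: "'a set \<Rightarrow> 'a set set \<Rightarrow> 'a set set \<Rightarrow> nat" where
  "forcing_number V E M = (LEAST k. \<exists>S. forcing_set V E M S \<and> card S = k)"

text \<open>A matching 2-switch: C = a b c d a is an M-alternating 4-cycle with
ab, cd in M and bc, da in E - M; the result is M xor E(C).\<close>
definition matching_2switch :: "'a set set \<Rightarrow> 'a set set \<Rightarrow> 'a set set \<Rightarrow> bool" where
  "matching_2switch E M M' \<longleftrightarrow>
     (\<exists>a b c d. distinct [a, b, c, d] \<and>
        {a, b} \<in> M \<and> {c, d} \<in> M \<and>
        {b, c} \<in> E \<and> {b, c} \<notin> M \<and> {d, a} \<in> E \<and> {d, a} \<notin> M \<and>
        M' = (M - {{a, b}, {c, d}}) \<union> {{b, c}, {d, a}})"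

end

theory Submission
  imports Defs
begin

text \<open>
  Since \<open>f(G, M\<^sub>s) = n - 1\<close>, deleting any two edges \<open>e, f\<close> from \<open>M\<^sub>s\<close> leaves a set that does not
  force \<open>M\<^sub>s\<close>; the perfect matching it admits instead must rematch the four ends of \<open>e, f\<close>,
  so any two edges of \<open>M\<^sub>s\<close> lie on an \<open>M\<^sub>s\<close>-alternating 4-cycle. Now let \<open>M\<close> be another
  perfect matching. An edge common to \<open>M\<close> and \<open>M\<^sub>s\<close> can be deleted together with its ends,
  which gives an induction on the number of vertices. If \<open>M\<close> and \<open>M\<^sub>s\<close> are disjoint, walk
  along the alternating cycle \<open>a\<^sub>0 b\<^sub>0 a\<^sub>1 b\<^sub>1 \<dots>\<close> with \<open>a\<^sub>i b\<^sub>i \<in> M\<^sub>s\<close> and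
  \<open>b\<^sub>i a\<^sub>i\<^sub>+\<^sub>1 \<in> M\<close>. A chord \<open>b\<^sub>i a\<^sub>i\<^sub>+\<^sub>2\<close> allows a 2-switch creating \<open>a\<^sub>i\<^sub>+\<^sub>1 b\<^sub>i\<^sub>+\<^sub>1\<close>;
  when such chords are missing, the 4-cycles on \<open>a\<^sub>i b\<^sub>i\<close> and \<open>a\<^sub>i\<^sub>+\<^sub>2 b\<^sub>i\<^sub>+\<^sub>2\<close> are
  forced to use the chords \<open>a\<^sub>i a\<^sub>i\<^sub>+\<^sub>2\<close> and \<open>b\<^sub>i b\<^sub>i\<^sub>+\<^sub>2\<close>, and a case analysis on the
  first five edges \<open>a\<^sub>i b\<^sub>i\<close> shows that at most two 2-switches make \<open>M\<close> meet \<open>M\<^sub>s\<close>.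
\<close>

text \<open>
  The induction deletes vertices but keeps the edge set, so matchings are required to stay
  inside the current vertex set.
\<close>
definition induced_perfect_matching :: "'a set \<Rightarrow> 'a set set \<Rightarrow> 'a set set \<Rightarrow> bool" where
  "induced_perfect_matching V E M \<longleftrightarrow> perfect_matching V E M \<and> \<Union>M \<subseteq> V"

definition alternating_squares :: "'a set set \<Rightarrow> 'a set set \<Rightarrow> bool" where
  "alternating_squares E Ms \<longleftrightarrow>
     (\<forall>e\<in>Ms. \<forall>f\<in>Ms. e \<noteq> f \<longrightarrow>
        (\<exists>a b c d. e = {a, b} \<and> f = {c, d} \<and> {a, c} \<in> E \<and> {b, d} \<in> E))"

text \<open>Only meaningful for matched vertices; otherwise \<open>THE\<close> yields an unspecified value.\<close>
definition mate :: "'a set set \<Rightarrow> 'a \<Rightarrow> 'a" where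
  "mate M v = (THE u. {v, u} \<in> M)"

lemma induced_perfect_matching_subset: "induced_perfect_matching V E M \<Longrightarrow> M \<subseteq> E"
  unfolding induced_perfect_matching_def perfect_matching_def by blast

lemma induced_perfect_matching_edge_unique:
  assumes "induced_perfect_matching V E M" "e \<in> M" "f \<in> M" "v \<in> e" "v \<in> f"
  shows "e = f"
  using assms unfolding induced_perfect_matching_def perfect_matching_def by blast

lemma induced_perfect_matching_mate_unique:
  assumes "induced_perfect_matching V E M" "{x, y} \<in> M" "{x, z} \<in> M"
  shows "y = z"
  using induced_perfect_matching_edge_unique[OF assms, of x] by (auto simp: doubleton_eq_iff)

lemma mate_eqI: "induced_perfect_matching V E M \<Longrightarrow> {v, u} \<in> M \<Longrightarrow> mate M v = u"
  unfolding mate_def by (rule the_equality) (auto intro: induced_perfect_matching_mate_unique)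

lemma alternating_squaresD:
  assumes "alternating_squares E Ms" "{a, b} \<in> Ms" "{c, d} \<in> Ms" "{a, b} \<noteq> {c, d}"
  shows "({a, c} \<in> E \<and> {b, d} \<in> E) \<or> ({a, d} \<in> E \<and> {b, c} \<in> E)"
proof -
  obtain p q r s where "{a, b} = {p, q}" "{c, d} = {r, s}" "{p, r} \<in> E" "{q, s} \<in> E"
    using assms(1)[unfolded alternating_squares_def, rule_format, OF assms(2-4)] by blast
  then show ?thesis unfolding doubleton_eq_iff by (elim disjE conjE) (simp_all add: insert_commute)
qed

lemma alternating_squares_subset:
  "alternating_squares E Ms \<Longrightarrow> Ms' \<subseteq> Ms \<Longrightarrow> alternating_squares E Ms'"
  unfolding alternating_squares_def by blast

lemma matching_2switch_Union: "matching_2switch E M M' \<Longrightarrow> \<Union>M' = \<Union>M"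
  unfolding matching_2switch_def by auto

lemma rtranclp_matching_2switch_Union: "(matching_2switch E)\<^sup>*\<^sup>* M M' \<Longrightarrow> \<Union>M' = \<Union>M"
  by (induction rule: rtranclp_induct) (simp_all add: matching_2switch_Union)

lemma matching_2switch_insert:
  assumes sw: "matching_2switch E M M'" and W: "\<Union>M \<subseteq> W" "e \<inter> W = {}" "e \<noteq> {}"
  shows "matching_2switch E (insert e M) (insert e M')"
proof -
  obtain a b c d where abcd: "distinct [a, b, c, d]" "{a, b} \<in> M" "{c, d} \<in> M"
      "{b, c} \<in> E" "{b, c} \<notin> M" "{d, a} \<in> E" "{d, a} \<notin> M"
    and M': "M' = M - {{a, b}, {c, d}} \<union> {{b, c}, {d, a}}"
    using sw unfolding matching_2switch_def by blast
  have "e \<notin> {{a, b}, {c, d}, {b, c}, {d, a}}"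
    using W abcd(2,3) by blast
  then have "insert e M' = insert e M - {{a, b}, {c, d}} \<union> {{b, c}, {d, a}}"
    and "{b, c} \<notin> insert e M" "{d, a} \<notin> insert e M"
    using M' abcd(5,7) by auto
  then show ?thesis
    unfolding matching_2switch_def using abcd(1-4,6) by blast
qed

lemma rtranclp_matching_2switch_insert:
  assumes "(matching_2switch E)\<^sup>*\<^sup>* M M'" "\<Union>M \<subseteq> W" "e \<inter> W = {}" "e \<noteq> {}"
  shows "(matching_2switch E)\<^sup>*\<^sup>* (insert e M) (insert e M')"
  using assms(1)
proof (induction rule: rtranclp_induct)
  case (step M1 M2)
  have "\<Union>M1 \<subseteq> W" using rtranclp_matching_2switch_Union[OF step.hyps(1)] assms(2) by simp
  then show ?case
    using step matching_2switch_insert[OF step.hyps(2) _ assms(3,4)] by (meson rtranclp.simps)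
qed simp

lemma induced_perfect_matching_Diff:
  assumes pm: "induced_perfect_matching V E M" and e: "e \<in> M"
  shows "induced_perfect_matching (V - e) E (M - {e})"
  using induced_perfect_matching_edge_unique[OF pm _ e] pm
  unfolding induced_perfect_matching_def perfect_matching_def by blast

lemma matching_2switch_induced_perfect_matching:
  assumes pm: "induced_perfect_matching V E M" and sw: "matching_2switch E M M'"
  shows "induced_perfect_matching V E M'"
proof -
  obtain a b c d where abcd: "distinct [a, b, c, d]" "{a, b} \<in> M" "{c, d} \<in> M"
      "{b, c} \<in> E" "{d, a} \<in> E"
    and M': "M' = M - {{a, b}, {c, d}} \<union> {{b, c}, {d, a}}"
    using sw unfolding matching_2switch_def by blast
  have avoid: "g \<inter> {a, b, c, d} = {}" if "g \<in> M - {{a, b}, {c, d}}" for g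
    using that abcd(2,3) induced_perfect_matching_edge_unique[OF pm] by blast
  have "\<exists>!g. g \<in> M' \<and> v \<in> g" if v: "v \<in> V" for v
  proof (cases "v \<in> {a, b, c, d}")
    case True
    then obtain g where g: "g \<in> {{b, c}, {d, a}}" "v \<in> g" by blast
    have disj: "{b, c} \<inter> {d, a} = {}" using abcd(1) by auto
    have "h = g" if h: "h \<in> M'" "v \<in> h" for h
    proof -
      have "h \<notin> M - {{a, b}, {c, d}}" using avoid[of h] True h(2) by blast
      then have "h \<in> {{b, c}, {d, a}}" using h(1) unfolding M' by blast
      then show ?thesis using g h(2) disj by blast
    qed
    moreover have "g \<in> M'" using g(1) unfolding M' by blast
    ultimately show ?thesis using g(2) by (intro ex1I[of _ g]) blast+
  next
    case False
    obtain e where e: "e \<in> M" "v \<in> e"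
      using pm v unfolding induced_perfect_matching_def perfect_matching_def by blast
    then have "e \<in> M'" using False unfolding M' by auto
    moreover have "h = e" if h: "h \<in> M'" "v \<in> h" for h
    proof -
      have "h \<notin> {{b, c}, {d, a}}" using False h(2) by blast
      then have "h \<in> M" using h(1) unfolding M' by blast
      then show ?thesis using induced_perfect_matching_edge_unique[OF pm _ e(1) h(2) e(2)] by blast
    qed
    ultimately show ?thesis using e(2) by (intro ex1I[of _ e]) blast+
  qed
  moreover have "M' \<subseteq> E"
    using induced_perfect_matching_subset[OF pm] abcd(2-5) unfolding M' by blast
  ultimately show ?thesis
    using pm matching_2switch_Union[OF sw]
    unfolding induced_perfect_matching_def perfect_matching_def by simp
qed

lemma rtranclp_matching_2switch_induced_perfect_matching:
  "(matching_2switch E)\<^sup>*\<^sup>* M M' \<Longrightarrow> induced_perfect_matching V E M \<Longrightarrow>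
    induced_perfect_matching V E M'"
  by (induction rule: rtranclp_induct) (blast intro: matching_2switch_induced_perfect_matching)+

lemma matched_within_rematched_edges:
  assumes pm: "induced_perfect_matching V E Ms" "induced_perfect_matching V E M'"
    and sub: "Ms - {e, f} \<subseteq> M'" and "e \<in> Ms" "f \<in> Ms"
    and vw: "{v, w} \<in> M'" and v: "v \<in> e \<union> f"
  shows "w \<in> e \<union> f"
proof (rule ccontr)
  assume w: "w \<notin> e \<union> f"
  have "w \<in> V" using vw pm(2) unfolding induced_perfect_matching_def by blast
  then obtain h where h: "h \<in> Ms" "w \<in> h"
    using pm(1) unfolding induced_perfect_matching_def perfect_matching_def by blast
  then have "h \<in> M'" using sub w by blast
  then have "v \<in> h" using induced_perfect_matching_edge_unique[OF pm(2) _ vw, of h w] h(2) by blast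
  then have "h = e \<or> h = f"
    using v induced_perfect_matching_edge_unique[OF pm(1) h(1)] \<open>e \<in> Ms\<close> \<open>f \<in> Ms\<close> by blast
  then show False using h(2) w by blast
qed

locale two_uniform =
  fixes E :: "'a set set"
  assumes card_edge: "e \<in> E \<Longrightarrow> card e = 2"
begin

lemma edge_neq: "{x, y} \<in> E \<Longrightarrow> x \<noteq> y"
  using card_edge by fastforce

lemma ex_mate:
  assumes pm: "induced_perfect_matching V E M" and v: "v \<in> V"
  shows "\<exists>u. {v, u} \<in> M"
proof -
  obtain e where e: "e \<in> M" "v \<in> e"
    using pm v unfolding induced_perfect_matching_def perfect_matching_def by blast
  then obtain x y where "e = {x, y}"
    using card_edge induced_perfect_matching_subset[OF pm] by (meson card_2_iff subsetD)
  with e show ?thesis by (auto simp: insert_commute)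
qed

lemma mate_in: "induced_perfect_matching V E M \<Longrightarrow> v \<in> V \<Longrightarrow> {v, mate M v} \<in> M"
  using ex_mate mate_eqI by fastforce

lemma matched_neq: "induced_perfect_matching V E M \<Longrightarrow> {x, y} \<in> M \<Longrightarrow> x \<noteq> y"
  using edge_neq induced_perfect_matching_subset by blast

lemma matching_2switchI:
  assumes pm: "induced_perfect_matching V E M"
    and M: "{a, b} \<in> M" "{c, d} \<in> M" "{a, b} \<noteq> {c, d}" and E: "{b, c} \<in> E" "{d, a} \<in> E"
  shows "matching_2switch E M (M - {{a, b}, {c, d}} \<union> {{b, c}, {d, a}})"
proof -
  have disj: "{a, b} \<inter> {c, d} = {}"
    using induced_perfect_matching_edge_unique[OF pm M(1,2)] M(3) by blast
  have "a \<noteq> b" "c \<noteq> d" using matched_neq[OF pm] M by blast+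
  moreover have "{b, c} \<notin> M" "{d, a} \<notin> M"
    using induced_perfect_matching_edge_unique[OF pm] M(1,2) disj by blast+
  ultimately show ?thesis
    unfolding matching_2switch_def using disj M E
    by (intro exI[of _ a] exI[of _ b] exI[of _ c] exI[of _ d]) auto
qed

lemma switch_creates_edge:
  assumes pm: "induced_perfect_matching V E M" and ab: "{a, b} \<in> E" "{a, b} \<notin> M"
    and M: "{x, a} \<in> M" "{b, y} \<in> M" and xy: "{x, y} \<in> E"
  shows "\<exists>M'. matching_2switch E M M' \<and> {a, b} \<in> M'"
proof -
  have "{x, a} \<noteq> {b, y}"
    using edge_neq[OF ab(1)] ab(2) M(1) by (auto simp: doubleton_eq_iff insert_commute)
  then have "matching_2switch E M (M - {{x, a}, {b, y}} \<union> {{a, b}, {y, x}})"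
    using matching_2switchI[OF pm M] ab(1) xy by (simp add: insert_commute)
  then show ?thesis by blast
qed

lemma induced_perfect_matching_eqI:
  assumes pm: "induced_perfect_matching V E M" "induced_perfect_matching V E M'" and "M \<subseteq> M'"
  shows "M' = M"
proof -
  have "h \<in> M" if h: "h \<in> M'" for h
  proof -
    obtain v where v: "v \<in> h"
      using h card_edge induced_perfect_matching_subset[OF pm(2)] by fastforce
    then have "v \<in> V" using h pm(2) unfolding induced_perfect_matching_def by blast
    then obtain k where "k \<in> M" "v \<in> k"
      using pm(1) unfolding induced_perfect_matching_def perfect_matching_def by blast
    then show ?thesis
      using induced_perfect_matching_edge_unique[OF pm(2) h, of k v] v \<open>M \<subseteq> M'\<close> by blast
  qed
  then show ?thesis using \<open>M \<subseteq> M'\<close> by blast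
qed

lemma card_induced_perfect_matching:
  assumes pm: "induced_perfect_matching V E M" and fin: "finite V"
  shows "card V = 2 * card M"
proof -
  have V: "\<Union>M = V"
    using pm unfolding induced_perfect_matching_def perfect_matching_def by blast
  have "card (\<Union>M) = sum card M"
    using fin V induced_perfect_matching_edge_unique[OF pm]
    by (intro card_Union_disjoint) (auto simp: pairwise_def disjnt_def intro: rev_finite_subset)
  also have "\<dots> = 2 * card M"
    using card_edge induced_perfect_matching_subset[OF pm] by (simp add: subset_iff)
  finally show ?thesis using V by simp
qed

lemma rtranclp_switch_creates_edge:
  assumes pm: "induced_perfect_matching V E M" and M1: "(matching_2switch E)\<^sup>*\<^sup>* M M1"
    and ab: "{a, b} \<in> E" "{a, b} \<notin> M1" and "{x, a} \<in> M1" "{b, y} \<in> M1" "{x, y} \<in> E"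
  shows "\<exists>M'. (matching_2switch E)\<^sup>*\<^sup>* M M' \<and> {a, b} \<in> M'"
proof -
  have "induced_perfect_matching V E M1"
    using rtranclp_matching_2switch_induced_perfect_matching[OF M1 pm] .
  then obtain M' where "matching_2switch E M1 M'" "{a, b} \<in> M'"
    using switch_creates_edge assms(3-7) by blast
  then show ?thesis using M1 by (meson rtranclp.rtrancl_into_rtrancl)
qed

end

locale alternating_walk = two_uniform E for E :: "'a set set" +
  fixes V :: "'a set" and M Ms :: "'a set set" and a b :: "nat \<Rightarrow> 'a"
  assumes pm_M: "induced_perfect_matching V E M"
    and pm_Ms: "induced_perfect_matching V E Ms"
    and disjoint: "M \<inter> Ms = {}"
    and Ms_step: "{a i, b i} \<in> Ms"
    and M_step: "{b i, a (Suc i)} \<in> M"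
begin

lemma Ms_swap: "a i = b j \<Longrightarrow> b i = a j"
  using induced_perfect_matching_mate_unique[OF pm_Ms] Ms_step by (metis insert_commute)

lemma M_swap: "a (Suc i) = b j \<Longrightarrow> b i = a (Suc j)"
  using induced_perfect_matching_mate_unique[OF pm_M] M_step by (metis insert_commute)

lemma b_eq_iff: "b i = b j \<longleftrightarrow> a i = a j"
  using induced_perfect_matching_mate_unique[OF pm_Ms] Ms_step by (metis insert_commute)

lemma a_Suc_eq_iff: "a (Suc i) = a (Suc j) \<longleftrightarrow> a i = a j"
  using induced_perfect_matching_mate_unique[OF pm_M] M_step b_eq_iff by (metis insert_commute)

lemma a_add_eq_iff: "a (i + k) = a (j + k) \<longleftrightarrow> a i = a j"
  by (induction k) (simp_all add: a_Suc_eq_iff)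

lemma a_Suc_neq: "a (i + 1) \<noteq> a i"
  using M_step[of i] Ms_step[of i] disjoint by (auto simp: insert_commute)

text \<open>
  Applying the two matchings to \<open>a\<^sub>i = b\<^sub>i\<^sub>+\<^sub>d\<close> gives \<open>a\<^sub>i\<^sub>+\<^sub>1 = b\<^sub>i\<^sub>+\<^sub>d\<^sub>-\<^sub>1\<close>,
  so the gap shrinks by two until it reaches \<open>0\<close> or \<open>-1\<close>, where the matchings forbid it.
\<close>
lemma a_neq_b_add: "a i \<noteq> b (i + d)"
proof (induction d arbitrary: i rule: less_induct)
  case (less d)
  show ?case
  proof
    assume eq: "a i = b (i + d)"
    show False
    proof (cases d)
      case 0
      then show False using eq matched_neq[OF pm_Ms Ms_step] by simp
    next
      case (Suc d')
      have "a (Suc (i + d')) = b i" using Ms_swap[OF eq] Suc by simp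
      then have eq': "a (Suc i) = b (i + d')" using M_swap by metis
      show False
      proof (cases d')
        case 0
        then show False using eq' matched_neq[OF pm_M M_step[of i]] by simp
      next
        case (Suc d'')
        then show False using eq' less.IH[of d'' "Suc i"] \<open>d = Suc d'\<close> by simp
      qed
    qed
  qed
qed

lemma a_neq_b: "a i \<noteq> b j"
proof (cases "i \<le> j")
  case True
  then show ?thesis using a_neq_b_add[of i "j - i"] by simp
next
  case False
  then obtain d where i: "i = Suc (j + d)" using less_iff_Suc_add[of j i] by auto
  show ?thesis
  proof
    assume "a i = b j"
    then have eq: "a (Suc j) = b (j + d)" using M_swap[of "j + d" j] i by simp
    show False
    proof (cases d)
      case 0
      then show False using eq matched_neq[OF pm_M M_step[of j]] by simp
    next
      case (Suc d')
      then show False using eq a_neq_b_add[of "Suc j" d'] by simp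
    qed
  qed
qed

lemma b_neq_a: "b j \<noteq> a i"
  using a_neq_b by metis

lemma M_step_add: "{b i, a (i + 1)} \<in> M"
  using M_step by simp

lemma Ms_edge: "{a i, b i} \<in> E"
  using Ms_step induced_perfect_matching_subset[OF pm_Ms] by blast

lemma common_edge_if_chord:
  assumes "{b i, a (i + 2)} \<in> E"
  shows "\<exists>M'. (matching_2switch E)\<^sup>*\<^sup>* M M' \<and> M' \<inter> Ms \<noteq> {}"
proof -
  have "{a (i + 1), b (i + 1)} \<notin> M" using Ms_step disjoint by blast
  moreover have "{b (i + 1), a (i + 2)} \<in> M" using M_step_add[of "i + 1"] by simp
  ultimately obtain M' where "(matching_2switch E)\<^sup>*\<^sup>* M M'" "{a (i + 1), b (i + 1)} \<in> M'"
    using rtranclp_switch_creates_edge[OF pm_M rtranclp.rtrancl_refl Ms_edge _ M_step_add _ assms]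
    by blast
  then show ?thesis using Ms_step by blast
qed

lemma parallel_chords:
  assumes P: "alternating_squares E Ms" and no_chord: "{b i, a (i + 2)} \<notin> E"
  shows "{a i, a (i + 2)} \<in> E \<and> {b i, b (i + 2)} \<in> E"
proof -
  have "a (i + 2) \<noteq> a i" using no_chord Ms_edge[of i] by (metis insert_commute)
  then have "{a i, b i} \<noteq> {a (i + 2), b (i + 2)}" by (simp add: doubleton_eq_iff a_neq_b)
  then show ?thesis
    using alternating_squaresD[OF P Ms_step Ms_step] no_chord by (metis insert_commute)
qed

lemma common_edge_reachable_crossed:
  assumes P: "alternating_squares E Ms" and a02: "{a 0, a 2} \<in> E"
    and no23: "{a 2, a 3} \<notin> E" and no14: "{a 1, a 4} \<notin> E"
  shows "\<exists>M'. (matching_2switch E)\<^sup>*\<^sup>* M M' \<and> M' \<inter> Ms \<noteq> {}"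
proof -
  have "a 0 \<noteq> a 2" using edge_neq[OF a02] .
  moreover have "a 0 \<noteq> a 3" using a02 no23 by (metis insert_commute)
  ultimately have a24: "a 2 \<noteq> a 4" and a14: "a 1 \<noteq> a 4"
    using a_add_eq_iff[where i = 0 and j = 2 and k = 2]
      a_add_eq_iff[where i = 0 and j = 3 and k = 1] by (simp_all add: eval_nat_numeral)
  have a23: "a 2 \<noteq> a 3" using a_Suc_neq[of 2] by simp
  have "{a 2, b 2} \<noteq> {a 3, b 3}" using a23 by (simp add: doubleton_eq_iff a_neq_b)
  then have E23: "{b 3, a 2} \<in> E" "{b 2, a 3} \<in> E"
    using alternating_squaresD[OF P Ms_step Ms_step] no23 by (metis insert_commute)+
  have "{a 1, b 1} \<noteq> {a 4, b 4}" using a14 by (simp add: doubleton_eq_iff a_neq_b)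
  then have E14: "{b 1, a 4} \<in> E"
    using alternating_squaresD[OF P Ms_step Ms_step] no14 by blast
  define M2 where "M2 = M - {{a 2, b 1}, {a 4, b 3}} \<union> {{b 1, a 4}, {b 3, a 2}}"
  have "{a 2, b 1} \<in> M" "{a 4, b 3} \<in> M"
    using M_step[of 1] M_step[of 3] by (simp_all add: insert_commute eval_nat_numeral)
  moreover have "{a 2, b 1} \<noteq> {a 4, b 3}" using a24 by (simp add: doubleton_eq_iff a_neq_b)
  ultimately have sw: "matching_2switch E M M2"
    unfolding M2_def using matching_2switchI[OF pm_M] E14 E23(1) by blast
  have "{b 3, a 2} \<in> M2" unfolding M2_def by blast
  moreover have "{b 2, a 3} \<in> M2"
    using M_step_add[of 2] a23 a_Suc_neq[of 3]
    unfolding M2_def by (auto simp: doubleton_eq_iff a_neq_b b_neq_a eval_nat_numeral)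
  moreover have "{a 2, b 2} \<notin> M2"
    using Ms_step[of 2] disjoint a24 a_Suc_neq[of 2]
    unfolding M2_def by (auto simp: doubleton_eq_iff a_neq_b b_neq_a b_eq_iff eval_nat_numeral)
  moreover have "{b 3, a 3} \<in> E" using Ms_edge[of 3] by (simp add: insert_commute)
  ultimately obtain M' where "(matching_2switch E)\<^sup>*\<^sup>* M M'" "{a 2, b 2} \<in> M'"
    using rtranclp_switch_creates_edge[OF pm_M r_into_rtranclp[of "matching_2switch E", OF sw] Ms_edge]
    by blast
  then show ?thesis using Ms_step by blast
qed

lemma parallel_chords_switch:
  assumes "{b 0, b 2} \<in> E" "{a 1, a 3} \<in> E" and b02: "b 0 \<noteq> b 2"
  shows "matching_2switch E M (M - {{a 1, b 0}, {b 2, a 3}} \<union> {{b 0, b 2}, {a 3, a 1}})"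
proof (rule matching_2switchI[OF pm_M])
  show "{a 1, b 0} \<in> M" "{b 2, a 3} \<in> M"
    using M_step[of 0] M_step[of 2] by (simp_all add: insert_commute eval_nat_numeral)
  show "{a 1, b 0} \<noteq> {b 2, a 3}" using b02 by (simp add: doubleton_eq_iff a_neq_b)
qed (use assms in \<open>simp_all add: insert_commute\<close>)

lemma common_edge_reachable_parallel:
  assumes P: "alternating_squares E Ms" and no02: "{b 0, a 2} \<notin> E" and no13: "{b 1, a 3} \<notin> E"
  shows "\<exists>M'. (matching_2switch E)\<^sup>*\<^sup>* M M' \<and> M' \<inter> Ms \<noteq> {}"
proof -
  have E02: "{a 0, a 2} \<in> E" "{b 0, b 2} \<in> E"
    using parallel_chords[OF P, of 0] no02 by (simp_all add: eval_nat_numeral)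
  have E13: "{a 1, a 3} \<in> E"
    using parallel_chords[OF P, of 1] no13 by (simp add: eval_nat_numeral)
  have "a 0 \<noteq> a 2" using edge_neq[OF E02(1)] .
  then have a13: "a 1 \<noteq> a 3" and b02: "b 0 \<noteq> b 2" and b12: "b 1 \<noteq> b 2"
    using a_add_eq_iff[where i = 0 and j = 2 and k = 1] a_Suc_neq[of 1] b_eq_iff
    by (simp_all add: eval_nat_numeral)
  define M1 where "M1 = M - {{a 1, b 0}, {b 2, a 3}} \<union> {{b 0, b 2}, {a 3, a 1}}"
  have M1: "(matching_2switch E)\<^sup>*\<^sup>* M M1"
    unfolding M1_def using parallel_chords_switch[OF E02(2) E13 b02] by (rule r_into_rtranclp)
  have a31: "{a 3, a 1} \<in> M1" and b1a2: "{b 1, a 2} \<in> M1"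
    using M_step_add[of 1] a_Suc_neq[of 1] b12 unfolding M1_def
    by (auto simp: doubleton_eq_iff a_neq_b b_neq_a eval_nat_numeral)
  consider (chord23) "{a 2, a 3} \<in> E" | (chord14) "{a 1, a 4} \<in> E"
    | (no_chord) "{a 2, a 3} \<notin> E" "{a 1, a 4} \<notin> E" by blast
  then show ?thesis
  proof cases
    case chord23
    have "{a 1, b 1} \<notin> M1"
      using Ms_step[of 1] disjoint a13 unfolding M1_def
      by (auto simp: doubleton_eq_iff a_neq_b b_neq_a eval_nat_numeral)
    moreover have "{a 3, a 2} \<in> E" using chord23 by (simp add: insert_commute)
    ultimately obtain M' where "(matching_2switch E)\<^sup>*\<^sup>* M M'" "{a 1, b 1} \<in> M'"
      using rtranclp_switch_creates_edge[OF pm_M M1 Ms_edge _ a31 b1a2] by blast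
    then show ?thesis using Ms_step by blast
  next
    case chord14
    have "{a 3, b 3} \<notin> M1"
      using Ms_step[of 3] disjoint a13 unfolding M1_def
      by (auto simp: doubleton_eq_iff a_neq_b b_neq_a eval_nat_numeral)
    moreover have "{a 1, a 3} \<in> M1" using a31 by (simp add: insert_commute)
    moreover have "{b 3, a 4} \<in> M1"
      using M_step_add[of 3] a_Suc_neq[of 3] edge_neq[OF chord14] unfolding M1_def
      by (auto simp: doubleton_eq_iff a_neq_b b_neq_a b_eq_iff eval_nat_numeral)
    ultimately obtain M' where "(matching_2switch E)\<^sup>*\<^sup>* M M'" "{a 3, b 3} \<in> M'"
      using rtranclp_switch_creates_edge[OF pm_M M1 Ms_edge] chord14 by blast
    then show ?thesis using Ms_step by blast
  next
    case no_chord
    then show ?thesis using common_edge_reachable_crossed[OF P E02(1)] by blast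
  qed
qed

lemma common_edge_reachable:
  assumes "alternating_squares E Ms"
  shows "\<exists>M'. (matching_2switch E)\<^sup>*\<^sup>* M M' \<and> M' \<inter> Ms \<noteq> {}"
proof (cases "{b 0, a 2} \<in> E \<or> {b 1, a 3} \<in> E")
  case True
  then show ?thesis
    using common_edge_if_chord[of 0] common_edge_if_chord[of 1] by (auto simp: eval_nat_numeral)
next
  case False
  then show ?thesis using common_edge_reachable_parallel[OF assms] by blast
qed

end

context two_uniform
begin

lemma mate_in_Union: "induced_perfect_matching V E M \<Longrightarrow> v \<in> V \<Longrightarrow> mate M v \<in> V"
  using mate_in unfolding induced_perfect_matching_def by blast

lemma common_edge_reachable_if_disjoint:
  assumes pm: "induced_perfect_matching V E M" "induced_perfect_matching V E Ms"
    and disjoint: "M \<inter> Ms = {}" and "Ms \<noteq> {}" and P: "alternating_squares E Ms"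
  shows "\<exists>M'. (matching_2switch E)\<^sup>*\<^sup>* M M' \<and> M' \<inter> Ms \<noteq> {}"
proof -
  obtain e where e: "e \<in> Ms" using \<open>Ms \<noteq> {}\<close> by blast
  then obtain v where "v \<in> e"
    using card_edge induced_perfect_matching_subset[OF pm(2)] by fastforce
  then have v: "v \<in> V" using e pm(2) unfolding induced_perfect_matching_def by blast
  define a where "a i = ((mate M \<circ> mate Ms) ^^ i) v" for i
  define b where "b i = mate Ms (a i)" for i
  have aV: "a i \<in> V" for i
  proof (induction i)
    case 0
    then show ?case using v by (simp add: a_def)
  next
    case (Suc i)
    then show ?case
      using mate_in_Union[OF pm(1) mate_in_Union[OF pm(2)]] by (simp add: a_def)
  qed
  have "{a i, b i} \<in> Ms" for i unfolding b_def using mate_in[OF pm(2) aV] .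
  moreover have "{b i, a (Suc i)} \<in> M" for i
    using mate_in[OF pm(1) mate_in_Union[OF pm(2) aV]] by (simp add: a_def b_def)
  ultimately interpret alternating_walk E V M Ms a b
    using pm disjoint by unfold_locales
  show ?thesis using common_edge_reachable[OF P] .
qed

lemma induced_perfect_matching_empty_iff:
  assumes "induced_perfect_matching V E M"
  shows "M = {} \<longleftrightarrow> V = {}"
proof -
  have "e \<noteq> {}" if "e \<in> M" for e
    using that card_edge induced_perfect_matching_subset[OF assms] by fastforce
  then show ?thesis
    using assms unfolding induced_perfect_matching_def perfect_matching_def by blast
qed

lemma rtranclp_matching_2switch_insert_common_edge:
  assumes pm: "induced_perfect_matching V E M" and e: "e \<in> M" "e \<in> Ms"
    and sws: "(matching_2switch E)\<^sup>*\<^sup>* (M - {e}) (Ms - {e})"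
  shows "(matching_2switch E)\<^sup>*\<^sup>* M Ms"
proof -
  have "e \<noteq> {}" using e(1) card_edge induced_perfect_matching_subset[OF pm] by fastforce
  moreover have "\<Union>(M - {e}) \<subseteq> V - e"
    using induced_perfect_matching_Diff[OF pm e(1)] unfolding induced_perfect_matching_def by blast
  ultimately have "(matching_2switch E)\<^sup>*\<^sup>* (insert e (M - {e})) (insert e (Ms - {e}))"
    using rtranclp_matching_2switch_insert[OF sws] by blast
  then show ?thesis using e by (simp add: insert_absorb)
qed

lemma rtranclp_matching_2switch_to_alternating_squares:
  assumes "finite V" "induced_perfect_matching V E Ms" "alternating_squares E Ms"
    and "induced_perfect_matching V E M"
  shows "(matching_2switch E)\<^sup>*\<^sup>* M Ms"
  using assms
proof (induction "card V" arbitrary: V Ms M rule: less_induct)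
  case less
  note fin = less.prems(1) and pm_Ms = less.prems(2) and P = less.prems(3) and pm_M = less.prems(4)
  have common: "(matching_2switch E)\<^sup>*\<^sup>* M' Ms"
    if pm': "induced_perfect_matching V E M'" and e: "e \<in> M'" "e \<in> Ms" for M' e
  proof -
    have "e \<subseteq> V" "e \<noteq> {}"
      using e(2) pm_Ms card_edge induced_perfect_matching_subset[OF pm_Ms]
      unfolding induced_perfect_matching_def by fastforce+
    then have "card (V - e) < card V" using fin by (intro psubset_card_mono) blast+
    then have "(matching_2switch E)\<^sup>*\<^sup>* (M' - {e}) (Ms - {e})"
      using less.hyps fin induced_perfect_matching_Diff[OF pm' e(1)]
        induced_perfect_matching_Diff[OF pm_Ms e(2)] alternating_squares_subset[OF P] by blast
    then show ?thesis using rtranclp_matching_2switch_insert_common_edge[OF pm' e] by blast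
  qed
  show ?case
  proof (cases "M \<inter> Ms = {}")
    case False
    then show ?thesis using common[OF pm_M] by blast
  next
    case disjoint: True
    show ?thesis
    proof (cases "Ms = {}")
      case True
      then show ?thesis
        using induced_perfect_matching_empty_iff[OF pm_Ms] induced_perfect_matching_empty_iff[OF pm_M]
        by simp
    next
      case False
      then obtain M' where M': "(matching_2switch E)\<^sup>*\<^sup>* M M'" "M' \<inter> Ms \<noteq> {}"
        using common_edge_reachable_if_disjoint[OF pm_M pm_Ms disjoint _ P] by blast
      moreover have "induced_perfect_matching V E M'"
        using rtranclp_matching_2switch_induced_perfect_matching[OF M'(1) pm_M] .
      ultimately show ?thesis using common by (meson disjoint_iff rtranclp_trans)
    qed
  qed
qed

lemma ex_partner_within_rematched_edges:
  assumes pm: "induced_perfect_matching V E Ms" "induced_perfect_matching V E M'"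
    and sub: "Ms - {e, f} \<subseteq> M'" and ef: "e \<in> Ms" "f \<in> Ms" and v: "v \<in> e \<union> f"
  shows "\<exists>w\<in>e \<union> f. w \<noteq> v \<and> {v, w} \<in> M'"
proof -
  have "v \<in> V" using v ef pm(1) unfolding induced_perfect_matching_def by blast
  then obtain w where w: "{v, w} \<in> M'" using ex_mate[OF pm(2)] by blast
  then have "w \<in> e \<union> f" using matched_within_rematched_edges[OF pm sub ef _ v] by blast
  moreover have "w \<noteq> v" using matched_neq[OF pm(2) w] by simp
  ultimately show ?thesis using w by blast
qed

lemma rematched_edges_alternating_square:
  assumes pm: "induced_perfect_matching V E Ms" "induced_perfect_matching V E M'"
    and sub: "Ms - {e, f} \<subseteq> M'" and "M' \<noteq> Ms" and ef: "e \<in> Ms" "f \<in> Ms" "e \<noteq> f"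
  shows "\<exists>a b c d. e = {a, b} \<and> f = {c, d} \<and> {a, c} \<in> M' \<and> {b, d} \<in> M'"
proof -
  have disj: "e \<inter> f = {}" using induced_perfect_matching_edge_unique[OF pm(1) ef(1,2)] ef(3) by blast
  obtain a b c d where ab: "e = {a, b}" "a \<noteq> b" and cd: "f = {c, d}" "c \<noteq> d"
    using ef card_edge induced_perfect_matching_subset[OF pm(1)] by (metis card_2_iff subsetD)
  note partner = ex_partner_within_rematched_edges[OF pm sub ef(1,2)]
  have e_notin: "e \<notin> M'"
  proof
    assume e: "e \<in> M'"
    obtain u where u: "u \<in> e \<union> f" "u \<noteq> c" "{c, u} \<in> M'" using partner cd(1) by blast
    have "u \<notin> e" using induced_perfect_matching_edge_unique[OF pm(2) u(3) e] disj cd(1) by blast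
    then have "f \<in> M'" using u cd by (auto simp: insert_commute)
    then have "Ms \<subseteq> M'" using sub e by blast
    then show False using induced_perfect_matching_eqI[OF pm] \<open>M' \<noteq> Ms\<close> by blast
  qed
  obtain w where "w \<in> e \<union> f" "w \<noteq> a" and w2: "{a, w} \<in> M'" using partner ab(1) by blast
  moreover have "w \<noteq> b" using w2 e_notin ab(1) by blast
  ultimately have w: "w \<in> {c, d}" "{a, w} \<in> M'" using ab(1) cd(1) w2 by auto
  obtain w' where "w' \<in> e \<union> f" "w' \<noteq> b" and w'2: "{b, w'} \<in> M'" using partner ab(1) by blast
  moreover have "w' \<noteq> a" using w'2 e_notin ab(1) by (auto simp: insert_commute)
  ultimately have w': "w' \<in> {c, d}" "{b, w'} \<in> M'" using ab(1) cd(1) w'2 by auto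
  have "w \<noteq> w'"
    using induced_perfect_matching_mate_unique[OF pm(2), of w a b] w(2) w'(2) ab(2)
    by (auto simp: insert_commute)
  then consider "w = c" "w' = d" | "w = d" "w' = c" using w(1) w'(1) by blast
  then show ?thesis
  proof cases
    case 1
    then show ?thesis using ab cd w w' by blast
  next
    case 2
    then have "f = {d, c}" "{a, d} \<in> M'" "{b, c} \<in> M'" using cd w w' by auto
    then show ?thesis using ab by blast
  qed
qed

end

lemma two_uniform_if_simple_graph: "simple_graph V E \<Longrightarrow> two_uniform E"
  unfolding simple_graph_def by unfold_locales blast

lemma induced_perfect_matching_if_simple_graph:
  "simple_graph V E \<Longrightarrow> perfect_matching V E M \<Longrightarrow> induced_perfect_matching V E M"
  unfolding simple_graph_def perfect_matching_def induced_perfect_matching_def by blast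

lemma alternating_squares_if_forcing_number:
  assumes G: "simple_graph V E" and pm: "perfect_matching V E Ms"
    and large: "card Ms < forcing_number V E Ms + 2"
  shows "alternating_squares E Ms"
  unfolding alternating_squares_def
proof (intro ballI impI)
  interpret two_uniform E using two_uniform_if_simple_graph[OF G] .
  have pm_Ms: "induced_perfect_matching V E Ms"
    using induced_perfect_matching_if_simple_graph[OF G pm] .
  have "\<Union>Ms = V"
    using pm_Ms unfolding induced_perfect_matching_def perfect_matching_def by blast
  then have "finite Ms" using G unfolding simple_graph_def by (metis finite_UnionD)
  fix e f assume ef: "e \<in> Ms" "f \<in> Ms" "e \<noteq> f"
  have "{e, f} \<subseteq> Ms" "card {e, f} = 2" using ef by auto
  then have "card (Ms - {e, f}) + 2 = card Ms"
    using \<open>finite Ms\<close> card_mono[of Ms "{e, f}"] by (simp add: card_Diff_subset)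
  then have "\<not> forcing_set V E Ms (Ms - {e, f})"
    using large Least_le[of "\<lambda>k. \<exists>S. forcing_set V E Ms S \<and> card S = k"]
    unfolding forcing_number_def by fastforce
  then obtain M' where M': "perfect_matching V E M'" "Ms - {e, f} \<subseteq> M'" "M' \<noteq> Ms"
    unfolding forcing_set_def by blast
  have pm': "induced_perfect_matching V E M'"
    using induced_perfect_matching_if_simple_graph[OF G M'(1)] .
  show "\<exists>a b c d. e = {a, b} \<and> f = {c, d} \<and> {a, c} \<in> E \<and> {b, d} \<in> E"
    using rematched_edges_alternating_square[OF pm_Ms pm' M'(2,3) ef]
      induced_perfect_matching_subset[OF pm'] by blast
qed

theorem mainTheorem11:
  fixes V :: "'a set" and E :: "'a set set" and Ms :: "'a set set" and n :: nat
  assumes "n \<ge> 1"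
    and "simple_graph V E"
    and "card V = 2 * n"
    and "perfect_matching V E Ms"
    and "forcing_number V E Ms = n - 1"
  shows "\<forall>M. perfect_matching V E M \<longrightarrow> (matching_2switch E)\<^sup>*\<^sup>* M Ms"
proof (intro allI impI)
  fix M assume M: "perfect_matching V E M"
  interpret two_uniform E using two_uniform_if_simple_graph[OF assms(2)] .
  have fin: "finite V" using assms(2) unfolding simple_graph_def by blast
  have pm_Ms: "induced_perfect_matching V E Ms"
    using induced_perfect_matching_if_simple_graph[OF assms(2,4)] .
  have "card Ms = n" using card_induced_perfect_matching[OF pm_Ms fin] assms(3) by simp
  then have "alternating_squares E Ms"
    using alternating_squares_if_forcing_number[OF assms(2,4)] assms(5) by simp
  then show "(matching_2switch E)\<^sup>*\<^sup>* M Ms"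
    using rtranclp_matching_2switch_to_alternating_squares[OF fin pm_Ms]
      induced_perfect_matching_if_simple_graph[OF assms(2) M] by blast
qed

end
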